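(* (1) Soundness: if $\Phi;\Gamma\vdash_I t:\rho$ holds for a template type $\rho$, then $\Gamma\xi\vdash_J t:\rho\xi$ holds for every model $(J,\xi)$ of $\Phi$. (2) Completeness: if $\Gamma\vdash_J t:\rho$ holds for a context $\Gamma$ and a type $\rho$ (without second-order variables), then there exist a template type $\tau$ and a second-order substitution $\xi$ with $\tau\xi=\rho$ such that $\Phi;\Gamma\vdash_I t:\tau$ is derivable for some SOCP $\Phi$, and $(J,\xi)$ is a model of $\Phi$.
   Context: Simply typed terms over variables, function symbols $\mathcal F$, constructors $\mathcal C$: variables, symbols, applications $t\,u$, pairs $(t,u)$, $\mathsf{let}\ (x,y)=t\ \mathsf{in}\ u$. Second-order index terms $a::=i\mid\alpha\mid g(a_1,\dots,a_k)$ over index variables $i$, second-order variables $\alpha$, index symbols $g$ (including $0,\mathsf s,+$). An interpretation $J$ maps $k$-ary symbols to total weakly monotone functions $\mathbb N^k\to\mathbb N$ ($0,\mathsf s,+$ standard); $a\le_J b$ iff $[a]^\beta_J\le[b]^\beta_J$ for all assignments. An SOCP is a set of inequalities $a\le b$ and occurrence constraints $i\notin\alpha$; a second-order substitution $\xi$ maps second-order variables to index terms without second-order variables; $(J,\xi)$ is a model of $\Phi$ if $a\xi\le_J b\xi$ for all inequalities and $i\notin\mathrm{Var}(\xi(\alpha))$ for all occurrence constraints. Sized types: monotypes $\rho::=B^a\mid\rho_1\times\rho_2\mid\sigma\to\rho$; polytypes $\forall\vec i.\,\sigma\to\rho$; types $\sigma::=\rho\mid$ polytype; monotypes identified with $\forall\cdot.\rho$;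 template types may contain second-order variables. $\mathrm{FV}$ is the set of free index variables. $\forall\vec i.\tau\sqsupseteq\rho$ iff $\rho=\tau\{\vec i:=\vec a\}$. Subtyping $\sqsubseteq_J$: $B^a\sqsubseteq_J B^b$ if $a\le_J b$; componentwise on products; $\sigma_1\to\rho_1\sqsubseteq_J\sigma_2\to\rho_2$ if $\sigma_2\sqsubseteq_J\sigma_1$ and $\rho_1\sqsubseteq_J\rho_2$; $\forall\vec i.\rho_1\sqsubseteq_J\sigma_2$ if $\sigma_2\sqsupseteq\rho_2$, $\rho_1\sqsubseteq_J\rho_2$, $\vec i\cap\mathrm{FV}(\sigma_2)=\emptyset$. Every $s\in\mathcal F\cup\mathcal C$ has a closed declared sized type $s::\sigma$ (no second-order variables). Contexts $\Gamma$ map variables to (template) types; $\Gamma|_X$ restriction; $\Gamma\xi$ applies $\xi$ to all types. Syntax-directed typing $\Gamma\vdash_J t:\rho$: (Var) $\Gamma,x:\sigma\vdash x:\rho$ if $\sigma\sqsupseteq\rho$; (Fun) $\Gamma\vdash s:\rho$ if $s::\sigma$ and $\sigma\sqsupseteq\rho$; (Let) from $\Gamma\vdash t:\rho_1\times\rho_2$ and $\Gamma,x_1:\rho_1,x_2:\rho_2\vdash u:\rho$ infer $\Gamma\vdash\mathsf{let}\ (x_1,x_2)=t\ \mathsf{in}\ u:\rho$; (Pair) from $\Gamma\vdash t_i:\rho_i$ infer $\Gamma\vdash(t_1,t_2):\rho_1\times\rho_2$; (App) from $\Gamma\vdash t:(\forall\vec i.\tau_1)\to\rho$, $\Gamma\vdash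 u:\tau_2$, $\tau_2\sqsubseteq_J\tau_1$, $\vec i\cap\mathrm{FV}(\Gamma|_{\mathrm{FV}(u)})=\emptyset$ infer $\Gamma\vdash t\,u:\rho$. Subtyping inference $\Phi\vdash_I\sigma\sqsubseteq\tau$: $\{a\le b\}\vdash_I B^a\sqsubseteq B^b$; products: union of component constraints; arrows: from $\Phi_1\vdash_I\sigma_2\sqsubseteq\sigma_1$, $\Phi_2\vdash_I\rho_1\sqsubseteq\rho_2$ infer $\Phi_1\cup\Phi_2\vdash_I\sigma_1\to\rho_1\sqsubseteq\sigma_2\to\rho_2$; for fresh second-order $\vec\alpha$, from $\Phi\vdash_I\rho_1\sqsubseteq\rho_2\{\vec j:=\vec\alpha\}$ and $\vec i\cap\mathrm{FV}(\forall\vec j.\rho_2)=\emptyset$ infer $\Phi\cup\{\vec i\notin\rho_1\}\cup\{\vec i\notin\rho_2\}\vdash_I\forall\vec i.\rho_1\sqsubseteq\forall\vec j.\rho_2$, where $\vec i\notin\vec\rho$ is the set of occurrence constraints $i_k\notin\alpha$ for all $i_k\in\vec i$ and all second-order $\alpha$ occurring in $\vec\rho$ (for a context, in its types). Type inference $\Phi;\Gamma\vdash_I t:\rho$: (Var-I) $\emptyset;\Gamma,x:\forall\vec i.\rho\vdash_I x:\rho\{\vec i:=\vec\alpha\}$, $\vec\alpha$ fresh; (Fun-I) $\emptyset;\Gamma\vdash_I s:\rho\{\vec i:=\vec\alpha\}$ if $s\in\mathcal F\cup\mathcal C$, $s::\forall\vec i.\rho$, $\vec\alpha$ fresh; (Let-I)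 from $\Phi_1;\Gamma\vdash_I t:\rho_1\times\rho_2$ and $\Phi_2;\Gamma,x_1:\rho_1,x_2:\rho_2\vdash_I u:\rho$ infer $\Phi_1\cup\Phi_2;\Gamma\vdash_I\mathsf{let}\ (x_1,x_2)=t\ \mathsf{in}\ u:\rho$; (Pair-I) from $\Phi_i;\Gamma\vdash_I t_i:\rho_i$ infer $\Phi_1\cup\Phi_2;\Gamma\vdash_I(t_1,t_2):\rho_1\times\rho_2$; (App-I) from $\Phi_1;\Gamma\vdash_I t:(\forall\vec i.\tau_1)\to\rho$, $\Phi_2;\Gamma\vdash_I u:\tau_2$, $\Phi_3\vdash_I\tau_2\sqsubseteq\tau_1$ and $\vec i\cap\mathrm{FV}(\Gamma|_{\mathrm{FV}(u)})=\emptyset$ infer $\Phi_1\cup\Phi_2\cup\Phi_3\cup\{\vec i\notin\tau_1\}\cup\{\vec i\notin\Gamma|_{\mathrm{FV}(u)}\};\Gamma\vdash_I t\,u:\rho$. *)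

theory Defs
  imports Main
begin

text \<open>Index variables bound by a quantifier inside a type are represented
  locally nameless as IB d j (the j-th variable of the binder at depth d);
  they never occur in genuine index terms (see plain below).\<close>

datatype 'g idx = IV nat | IB nat nat | SV nat | IZ | IS "'g idx" | IP "'g idx" "'g idx"
  | IF 'g "'g idx list"

primrec ivs :: "'g idx \<Rightarrow> nat set" where
  "ivs (IV i) = {i}" | "ivs (IB d j) = {}" | "ivs (SV a) = {}" | "ivs IZ = {}"
| "ivs (IS a) = ivs a" | "ivs (IP a b) = ivs a \<union> ivs b"
| "ivs (IF g as) = \<Union> (set (map ivs as))"

primrec svs :: "'g idx \<Rightarrow> nat set" where
  "svs (IV i) = {}" | "svs (IB d j) = {}" | "svs (SV a) = {a}" | "svs IZ = {}"
| "svs (IS a) = svs a" | "svs (IP a b) = svs a \<union> svs b"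
| "svs (IF g as) = \<Union> (set (map svs as))"

primrec bvs :: "'g idx \<Rightarrow> (nat \<times> nat) set" where
  "bvs (IV i) = {}" | "bvs (IB d j) = {(d, j)}" | "bvs (SV a) = {}" | "bvs IZ = {}"
| "bvs (IS a) = bvs a" | "bvs (IP a b) = bvs a \<union> bvs b"
| "bvs (IF g as) = \<Union> (set (map bvs as))"

primrec iopen :: "nat \<Rightarrow> 'g idx list \<Rightarrow> 'g idx \<Rightarrow> 'g idx" where
  "iopen d as (IV i) = IV i"
| "iopen d as (IB k j) = (if k = d \<and> j < length as then as ! j else IB k j)"
| "iopen d as (SV a) = SV a" | "iopen d as IZ = IZ"
| "iopen d as (IS a) = IS (iopen d as a)"
| "iopen d as (IP a b) = IP (iopen d as a) (iopen d as b)"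
| "iopen d as (IF g bs) = IF g (map (iopen d as) bs)"

primrec iso :: "(nat \<Rightarrow> 'g idx) \<Rightarrow> 'g idx \<Rightarrow> 'g idx" where
  "iso \<xi> (IV i) = IV i" | "iso \<xi> (IB d j) = IB d j" | "iso \<xi> (SV a) = \<xi> a" | "iso \<xi> IZ = IZ"
| "iso \<xi> (IS a) = IS (iso \<xi> a)" | "iso \<xi> (IP a b) = IP (iso \<xi> a) (iso \<xi> b)"
| "iso \<xi> (IF g as) = IF g (map (iso \<xi>) as)"

text \<open>interpretation of index terms (0, s, + standard); only used on genuine index terms\<close>
primrec ieval :: "('g \<Rightarrow> nat list \<Rightarrow> nat) \<Rightarrow> (nat \<Rightarrow> nat) \<Rightarrow> 'g idx \<Rightarrow> nat" where
  "ieval J \<beta> (IV i) = \<beta> i" | "ieval J \<beta> (IB d j) = 0" | "ieval J \<beta> (SV a) = 0"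
| "ieval J \<beta> IZ = 0" | "ieval J \<beta> (IS a) = Suc (ieval J \<beta> a)"
| "ieval J \<beta> (IP a b) = ieval J \<beta> a + ieval J \<beta> b"
| "ieval J \<beta> (IF g as) = J g (map (ieval J \<beta>) as)"

definition plain :: "'g idx \<Rightarrow> bool" where
  "plain a \<longleftrightarrow> bvs a = {} \<and> svs a = {}"

text \<open>locally closed w.r.t. a stack of binder arities (innermost first)\<close>
definition lci :: "nat list \<Rightarrow> 'g idx \<Rightarrow> bool" where
  "lci stk a \<longleftrightarrow> (\<forall>(d, j) \<in> bvs a. d < length stk \<and> j < stk ! d)"

definition is_interp :: "('g \<Rightarrow> nat list \<Rightarrow> nat) \<Rightarrow> bool" where
  "is_interp J \<longleftrightarrow> (\<forall>g xs ys. list_all2 (\<le>) xs ys \<longrightarrow> J g xs \<le> J g ys)"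

definition ile :: "('g \<Rightarrow> nat list \<Rightarrow> nat) \<Rightarrow> 'g idx \<Rightarrow> 'g idx \<Rightarrow> bool" where
  "ile J a b \<longleftrightarrow> (\<forall>\<beta>. ieval J \<beta> a \<le> ieval J \<beta> b)"

text \<open>TB B a is B^a, TP is the product, TA n tau rho is (forall i1..in. tau) \<rightarrow> rho,
  where tau lives under the binder (its variables are IB 0 j inside tau).\<close>
datatype ('b, 'g) ty = TB 'b "'g idx" | TP "('b, 'g) ty" "('b, 'g) ty"
  | TA nat "('b, 'g) ty" "('b, 'g) ty"

text \<open>a (poly)type forall i1..in. rho; a monotype rho is identified with (0, rho)\<close>
type_synonym ('b, 'g) poly = "nat \<times> ('b, 'g) ty"

primrec tfv :: "('b, 'g) ty \<Rightarrow> nat set" where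
  "tfv (TB b a) = ivs a" | "tfv (TP r1 r2) = tfv r1 \<union> tfv r2"
| "tfv (TA n t r) = tfv t \<union> tfv r"

primrec tsv :: "('b, 'g) ty \<Rightarrow> nat set" where
  "tsv (TB b a) = svs a" | "tsv (TP r1 r2) = tsv r1 \<union> tsv r2"
| "tsv (TA n t r) = tsv t \<union> tsv r"

primrec topen :: "nat \<Rightarrow> 'g idx list \<Rightarrow> ('b, 'g) ty \<Rightarrow> ('b, 'g) ty" where
  "topen d as (TB b a) = TB b (iopen d as a)"
| "topen d as (TP r1 r2) = TP (topen d as r1) (topen d as r2)"
| "topen d as (TA n t r) = TA n (topen (Suc d) as t) (topen d as r)"

primrec tso :: "(nat \<Rightarrow> 'g idx) \<Rightarrow> ('b, 'g) ty \<Rightarrow> ('b, 'g) ty" where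
  "tso \<xi> (TB b a) = TB b (iso \<xi> a)" | "tso \<xi> (TP r1 r2) = TP (tso \<xi> r1) (tso \<xi> r2)"
| "tso \<xi> (TA n t r) = TA n (tso \<xi> t) (tso \<xi> r)"

primrec lct :: "nat list \<Rightarrow> ('b, 'g) ty \<Rightarrow> bool" where
  "lct stk (TB b a) = lci stk a" | "lct stk (TP r1 r2) = (lct stk r1 \<and> lct stk r2)"
| "lct stk (TA n t r) = (lct (n # stk) t \<and> lct stk r)"

primrec is_arrow :: "('b, 'g) ty \<Rightarrow> bool" where
  "is_arrow (TB b a) = False" | "is_arrow (TP r1 r2) = False" | "is_arrow (TA n t r) = True"

primrec wft :: "('b, 'g) ty \<Rightarrow> bool" where
  "wft (TB b a) = True" | "wft (TP r1 r2) = (wft r1 \<and> wft r2)"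
| "wft (TA n t r) = ((0 < n \<longrightarrow> is_arrow t) \<and> wft t \<and> wft r)"

definition pfv :: "('b, 'g) poly \<Rightarrow> nat set" where "pfv \<sigma> = tfv (snd \<sigma>)"
definition psv :: "('b, 'g) poly \<Rightarrow> nat set" where "psv \<sigma> = tsv (snd \<sigma>)"
definition pso :: "(nat \<Rightarrow> 'g idx) \<Rightarrow> ('b, 'g) poly \<Rightarrow> ('b, 'g) poly" where
  "pso \<xi> \<sigma> = (fst \<sigma>, tso \<xi> (snd \<sigma>))"
definition plc :: "('b, 'g) poly \<Rightarrow> bool" where "plc \<sigma> \<longleftrightarrow> lct [fst \<sigma>] (snd \<sigma>)"
definition pwf :: "('b, 'g) poly \<Rightarrow> bool" where
  "pwf \<sigma> \<longleftrightarrow> (0 < fst \<sigma> \<longrightarrow> is_arrow (snd \<sigma>)) \<and> wft (snd \<sigma>)"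

definition poly_ok :: "('b, 'g) poly \<Rightarrow> bool" where
  "poly_ok \<sigma> \<longleftrightarrow> plc \<sigma> \<and> pwf \<sigma>"
definition mono_ok :: "('b, 'g) ty \<Rightarrow> bool" where
  "mono_ok \<rho> \<longleftrightarrow> lct [] \<rho> \<and> wft \<rho>"
definition decl_ok :: "('b, 'g) poly \<Rightarrow> bool" where
  "decl_ok \<sigma> \<longleftrightarrow> poly_ok \<sigma> \<and> pfv \<sigma> = {} \<and> psv \<sigma> = {}"

definition inst :: "('b, 'g) poly \<Rightarrow> ('b, 'g) ty \<Rightarrow> bool" where
  "inst \<sigma> \<rho> \<longleftrightarrow> (\<exists>as. length as = fst \<sigma> \<and> (\<forall>a\<in>set as. plain a) \<and> \<rho> = topen 0 as (snd \<sigma>))"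

type_synonym ('v, 'b, 'g) ctx = "'v \<Rightarrow> ('b, 'g) poly option"

definition cfv :: "('v, 'b, 'g) ctx \<Rightarrow> nat set" where
  "cfv \<Gamma> = \<Union> {pfv \<sigma> | x \<sigma>. \<Gamma> x = Some \<sigma>}"
definition csv :: "('v, 'b, 'g) ctx \<Rightarrow> nat set" where
  "csv \<Gamma> = \<Union> {psv \<sigma> | x \<sigma>. \<Gamma> x = Some \<sigma>}"
definition cso :: "(nat \<Rightarrow> 'g idx) \<Rightarrow> ('v, 'b, 'g) ctx \<Rightarrow> ('v, 'b, 'g) ctx" where
  "cso \<xi> \<Gamma> = (\<lambda>x. map_option (pso \<xi>) (\<Gamma> x))"
definition ctx_ok :: "('v, 'b, 'g) ctx \<Rightarrow> bool" where
  "ctx_ok \<Gamma> \<longleftrightarrow> (\<forall>x \<sigma>. \<Gamma> x = Some \<sigma> \<longrightarrow> poly_ok \<sigma>)"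

datatype ('v, 'f) trm = TVar 'v | TSym 'f | TApp "('v, 'f) trm" "('v, 'f) trm"
  | TPair "('v, 'f) trm" "('v, 'f) trm" | TLet 'v 'v "('v, 'f) trm" "('v, 'f) trm"

primrec fvt :: "('v, 'f) trm \<Rightarrow> 'v set" where
  "fvt (TVar x) = {x}" | "fvt (TSym s) = {}" | "fvt (TApp t u) = fvt t \<union> fvt u"
| "fvt (TPair t u) = fvt t \<union> fvt u" | "fvt (TLet x y t u) = fvt t \<union> (fvt u - {x, y})"

inductive sub :: "('g \<Rightarrow> nat list \<Rightarrow> nat) \<Rightarrow> ('b, 'g) ty \<Rightarrow> ('b, 'g) ty \<Rightarrow> bool"
  and subp :: "('g \<Rightarrow> nat list \<Rightarrow> nat) \<Rightarrow> ('b, 'g) poly \<Rightarrow> ('b, 'g) poly \<Rightarrow> bool"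
  for J where
  sub_base: "ile J a a' \<Longrightarrow> sub J (TB b a) (TB b a')"
| sub_prod: "sub J r1 r1' \<Longrightarrow> sub J r2 r2' \<Longrightarrow> sub J (TP r1 r2) (TP r1' r2')"
| sub_arr: "subp J (n2, t2) (n1, t1) \<Longrightarrow> sub J r1 r2 \<Longrightarrow> sub J (TA n1 t1 r1) (TA n2 t2 r2)"
| subp_all: "length is = n1 \<Longrightarrow> distinct is \<Longrightarrow> set is \<inter> (tfv r1 \<union> pfv \<sigma>2) = {} \<Longrightarrow>
    inst \<sigma>2 r2 \<Longrightarrow> sub J (topen 0 (map IV is) r1) r2 \<Longrightarrow> subp J (n1, r1) \<sigma>2"

inductive hastype :: "('g \<Rightarrow> nat list \<Rightarrow> nat) \<Rightarrow> ('f \<Rightarrow> ('b, 'g) poly) \<Rightarrow> ('v, 'b, 'g) ctx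
    \<Rightarrow> ('v, 'f) trm \<Rightarrow> ('b, 'g) ty \<Rightarrow> bool"
  for J D where
  hastype_var: "\<Gamma> x = Some \<sigma> \<Longrightarrow> inst \<sigma> \<rho> \<Longrightarrow> hastype J D \<Gamma> (TVar x) \<rho>"
| hastype_fun: "inst (D s) \<rho> \<Longrightarrow> hastype J D \<Gamma> (TSym s) \<rho>"
| hastype_let: "hastype J D \<Gamma> t (TP r1 r2) \<Longrightarrow> hastype J D (\<Gamma>(x1 \<mapsto> (0, r1), x2 \<mapsto> (0, r2))) u \<rho> \<Longrightarrow>
    hastype J D \<Gamma> (TLet x1 x2 t u) \<rho>"
| hastype_pair: "hastype J D \<Gamma> t1 r1 \<Longrightarrow> hastype J D \<Gamma> t2 r2 \<Longrightarrow> hastype J D \<Gamma> (TPair t1 t2) (TP r1 r2)"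
| hastype_app: "hastype J D \<Gamma> t (TA n t1 \<rho>) \<Longrightarrow> hastype J D \<Gamma> u t2 \<Longrightarrow> sub J t2 (topen 0 (map IV is) t1) \<Longrightarrow>
    length is = n \<Longrightarrow> distinct is \<Longrightarrow> set is \<inter> (tfv t1 \<union> cfv (\<Gamma> |` fvt u)) = {} \<Longrightarrow>
    hastype J D \<Gamma> (TApp t u) \<rho>"

datatype 'g con = CLe "'g idx" "'g idx" | CNotIn nat nat

definition notin :: "nat list \<Rightarrow> nat set \<Rightarrow> 'g con set" where
  "notin is A = {CNotIn i \<alpha> | i \<alpha>. i \<in> set is \<and> \<alpha> \<in> A}"

primrec sat :: "('g \<Rightarrow> nat list \<Rightarrow> nat) \<Rightarrow> (nat \<Rightarrow> 'g idx) \<Rightarrow> 'g con \<Rightarrow> bool" where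
  "sat J \<xi> (CLe a b) = ile J (iso \<xi> a) (iso \<xi> b)"
| "sat J \<xi> (CNotIn i \<alpha>) = (i \<notin> ivs (\<xi> \<alpha>))"

definition model :: "('g \<Rightarrow> nat list \<Rightarrow> nat) \<Rightarrow> (nat \<Rightarrow> 'g idx) \<Rightarrow> 'g con set \<Rightarrow> bool" where
  "model J \<xi> \<Phi> \<longleftrightarrow> is_interp J \<and> (\<forall>\<alpha>. plain (\<xi> \<alpha>)) \<and> (\<forall>c\<in>\<Phi>. sat J \<xi> c)"

text \<open>The first argument S is the set of second-order variables chosen as fresh in the
  derivation; sub-derivations use pairwise disjoint supplies, which makes every fresh
  variable globally fresh.\<close>

inductive subI :: "nat set \<Rightarrow> 'g con set \<Rightarrow> ('b, 'g) ty \<Rightarrow> ('b, 'g) ty \<Rightarrow> bool"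
  and subIp :: "nat set \<Rightarrow> 'g con set \<Rightarrow> ('b, 'g) poly \<Rightarrow> ('b, 'g) poly \<Rightarrow> bool" where
  subI_base: "subI {} {CLe a a'} (TB b a) (TB b a')"
| subI_prod: "subI S1 \<Phi>1 r1 r1' \<Longrightarrow> subI S2 \<Phi>2 r2 r2' \<Longrightarrow> S1 \<inter> S2 = {} \<Longrightarrow>
    subI (S1 \<union> S2) (\<Phi>1 \<union> \<Phi>2) (TP r1 r2) (TP r1' r2')"
| subI_arr: "subIp S1 \<Phi>1 (n2, t2) (n1, t1) \<Longrightarrow> subI S2 \<Phi>2 r1 r2 \<Longrightarrow> S1 \<inter> S2 = {} \<Longrightarrow>
    subI (S1 \<union> S2) (\<Phi>1 \<union> \<Phi>2) (TA n1 t1 r1) (TA n2 t2 r2)"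
| subIp_all: "subI S \<Phi> (topen 0 (map IV is) r1) (topen 0 (map SV as) r2) \<Longrightarrow>
    length is = n1 \<Longrightarrow> distinct is \<Longrightarrow> length as = n2 \<Longrightarrow> distinct as \<Longrightarrow>
    set as \<inter> (S \<union> tsv r1 \<union> tsv r2) = {} \<Longrightarrow> set is \<inter> (tfv r1 \<union> tfv r2) = {} \<Longrightarrow>
    subIp (S \<union> set as) (\<Phi> \<union> notin is (tsv r1) \<union> notin is (tsv r2)) (n1, r1) (n2, r2)"

inductive inferI :: "('f \<Rightarrow> ('b, 'g) poly) \<Rightarrow> nat set \<Rightarrow> 'g con set \<Rightarrow> ('v, 'b, 'g) ctx
    \<Rightarrow> ('v, 'f) trm \<Rightarrow> ('b, 'g) ty \<Rightarrow> bool"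
  for D where
  inferI_var: "\<Gamma> x = Some (n, \<rho>) \<Longrightarrow> length as = n \<Longrightarrow> distinct as \<Longrightarrow> set as \<inter> csv \<Gamma> = {} \<Longrightarrow>
    inferI D (set as) {} \<Gamma> (TVar x) (topen 0 (map SV as) \<rho>)"
| inferI_fun: "D s = (n, \<rho>) \<Longrightarrow> length as = n \<Longrightarrow> distinct as \<Longrightarrow> set as \<inter> csv \<Gamma> = {} \<Longrightarrow>
    inferI D (set as) {} \<Gamma> (TSym s) (topen 0 (map SV as) \<rho>)"
| inferI_let: "inferI D S1 \<Phi>1 \<Gamma> t (TP r1 r2) \<Longrightarrow>
    inferI D S2 \<Phi>2 (\<Gamma>(x1 \<mapsto> (0, r1), x2 \<mapsto> (0, r2))) u \<rho> \<Longrightarrow> S1 \<inter> S2 = {} \<Longrightarrow>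
    inferI D (S1 \<union> S2) (\<Phi>1 \<union> \<Phi>2) \<Gamma> (TLet x1 x2 t u) \<rho>"
| inferI_pair: "inferI D S1 \<Phi>1 \<Gamma> t1 r1 \<Longrightarrow> inferI D S2 \<Phi>2 \<Gamma> t2 r2 \<Longrightarrow> S1 \<inter> S2 = {} \<Longrightarrow>
    inferI D (S1 \<union> S2) (\<Phi>1 \<union> \<Phi>2) \<Gamma> (TPair t1 t2) (TP r1 r2)"
| inferI_app: "inferI D S1 \<Phi>1 \<Gamma> t (TA n t1 \<rho>) \<Longrightarrow> inferI D S2 \<Phi>2 \<Gamma> u t2 \<Longrightarrow>
    subI S3 \<Phi>3 t2 (topen 0 (map IV is) t1) \<Longrightarrow>
    length is = n \<Longrightarrow> distinct is \<Longrightarrow> set is \<inter> (tfv t1 \<union> cfv (\<Gamma> |` fvt u)) = {} \<Longrightarrow>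
    S1 \<inter> S2 = {} \<Longrightarrow> S1 \<inter> S3 = {} \<Longrightarrow> S2 \<inter> S3 = {} \<Longrightarrow> S3 \<inter> csv \<Gamma> = {} \<Longrightarrow>
    inferI D (S1 \<union> S2 \<union> S3)
      (\<Phi>1 \<union> \<Phi>2 \<union> \<Phi>3 \<union> notin is (tsv t1) \<union> notin is (csv (\<Gamma> |` fvt u))) \<Gamma> (TApp t u) \<rho>"

end

theory Submission
  imports Defs
begin

text \<open>A model \<xi> maps second-order
  variables to plain index terms, so applying it commutes with opening; the inequality
  constraints become the side conditions of declarative subtyping, and the occurrence
  constraints \<open>i \<notin> \<alpha>\<close> are exactly what keeps the quantified index variables of (App) and of
  polymorphic subtyping fresh after substitution.

  Completeness is an induction on the declarative derivation, generalised to contexts of the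
  form \<open>\<Gamma>\<xi>\<close>. Every instantiation of a polytype by index terms is mirrored by fresh
  second-order variables that the solution maps to those terms. The solution is built up
  along the derivation, each step changing it only on variables fresh for everything
  inferred so far, so earlier constraints stay solved.\<close>

fun con_svs :: "'g con \<Rightarrow> nat set" where
  "con_svs (CLe a b) = svs a \<union> svs b"
| "con_svs (CNotIn i \<alpha>) = {\<alpha>}"

lemma iso_cong: "(\<And>\<alpha>. \<alpha> \<in> svs a \<Longrightarrow> \<xi> \<alpha> = \<xi>' \<alpha>) \<Longrightarrow> iso \<xi> a = iso \<xi>' a"
  by (induct a) auto

lemma tso_cong: "(\<And>\<alpha>. \<alpha> \<in> tsv r \<Longrightarrow> \<xi> \<alpha> = \<xi>' \<alpha>) \<Longrightarrow> tso \<xi> r = tso \<xi>' r"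
  by (induct r) (auto intro: iso_cong)

lemma sat_cong: "(\<And>\<alpha>. \<alpha> \<in> con_svs c \<Longrightarrow> \<xi> \<alpha> = \<xi>' \<alpha>) \<Longrightarrow> sat J \<xi> c = sat J \<xi>' c"
  by (cases c) (auto simp: iso_cong[of _ \<xi> \<xi>'])

lemma iso_no_svs: "svs a = {} \<Longrightarrow> iso \<xi> a = a"
  by (induct a) (auto intro: map_idI)

lemma tso_no_svs: "tsv r = {} \<Longrightarrow> tso \<xi> r = r"
  by (induct r) (auto simp: iso_no_svs)

lemma iopen_no_bvs: "bvs a = {} \<Longrightarrow> iopen d bs a = a"
  by (induct a) (auto intro: map_idI)

lemma iso_iopen:
  "(\<forall>\<alpha>. bvs (\<xi> \<alpha>) = {}) \<Longrightarrow> iso \<xi> (iopen d bs a) = iopen d (map (iso \<xi>) bs) (iso \<xi> a)"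
  by (induct a) (auto simp: iopen_no_bvs)

lemma tso_topen:
  "(\<forall>\<alpha>. bvs (\<xi> \<alpha>) = {}) \<Longrightarrow> tso \<xi> (topen d bs r) = topen d (map (iso \<xi>) bs) (tso \<xi> r)"
  by (induct r arbitrary: d) (auto simp: iso_iopen)

lemma ivs_iso: "ivs (iso \<xi> a) = ivs a \<union> (\<Union>\<alpha>\<in>svs a. ivs (\<xi> \<alpha>))"
  by (induct a) auto

lemma tfv_tso: "tfv (tso \<xi> r) = tfv r \<union> (\<Union>\<alpha>\<in>tsv r. ivs (\<xi> \<alpha>))"
  by (induct r) (auto simp: ivs_iso)

lemma tfv_tso_disjoint:
  "A \<inter> tfv (tso \<xi> r) = {} \<longleftrightarrow> A \<inter> tfv r = {} \<and> (\<forall>\<alpha>\<in>tsv r. A \<inter> ivs (\<xi> \<alpha>) = {})"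
  by (auto simp: tfv_tso)

lemma svs_iopen: "svs (iopen d bs a) \<subseteq> svs a \<union> (\<Union>b\<in>set bs. svs b)"
  by (induct a) (auto, use nth_mem in blast)

lemma tsv_topen: "tsv (topen d bs r) \<subseteq> tsv r \<union> (\<Union>b\<in>set bs. svs b)"
  by (induct r arbitrary: d) (auto, use svs_iopen in blast)

lemma tsv_topen_SV: "tsv (topen d (map SV as) r) \<subseteq> tsv r \<union> set as"
  using tsv_topen[of d "map SV as" r] by auto

lemma tsv_topen_IV: "tsv (topen d (map IV is) r) \<subseteq> tsv r"
  using tsv_topen[of d "map IV is" r] by auto

lemma tso_eq_TB: "tso \<xi> \<sigma> = TB b a \<longleftrightarrow> (\<exists>a0. \<sigma> = TB b a0 \<and> iso \<xi> a0 = a)"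
  by (cases \<sigma>) auto

lemma tso_eq_TP:
  "tso \<xi> \<sigma> = TP r1 r2 \<longleftrightarrow> (\<exists>q1 q2. \<sigma> = TP q1 q2 \<and> tso \<xi> q1 = r1 \<and> tso \<xi> q2 = r2)"
  by (cases \<sigma>) auto

lemma tso_eq_TA:
  "tso \<xi> \<sigma> = TA n r1 r2 \<longleftrightarrow> (\<exists>q1 q2. \<sigma> = TA n q1 q2 \<and> tso \<xi> q1 = r1 \<and> tso \<xi> q2 = r2)"
  by (cases \<sigma>) auto

lemma cso_Some: "cso \<xi> \<Gamma> x = Some \<sigma> \<longleftrightarrow> (\<exists>n r. \<Gamma> x = Some (n, r) \<and> \<sigma> = (n, tso \<xi> r))"
  by (cases "\<Gamma> x") (auto simp: cso_def pso_def)

lemma cso_upd: "cso \<xi> (\<Gamma>(x \<mapsto> (n, r))) = (cso \<xi> \<Gamma>)(x \<mapsto> (n, tso \<xi> r))"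
  by (auto simp: cso_def pso_def)

lemma cso_restrict: "cso \<xi> (\<Gamma> |` X) = cso \<xi> \<Gamma> |` X"
  by (auto simp: cso_def restrict_map_def)

lemma cfv_iff: "i \<in> cfv \<Gamma> \<longleftrightarrow> (\<exists>x n r. \<Gamma> x = Some (n, r) \<and> i \<in> tfv r)"
  unfolding cfv_def pfv_def by force

lemma csv_iff: "\<alpha> \<in> csv \<Gamma> \<longleftrightarrow> (\<exists>x n r. \<Gamma> x = Some (n, r) \<and> \<alpha> \<in> tsv r)"
  unfolding csv_def psv_def by force

lemma tsv_subset_csv: "\<Gamma> x = Some (n, r) \<Longrightarrow> tsv r \<subseteq> csv \<Gamma>"
  by (auto simp: csv_iff) blast

lemma csv_upd: "csv (\<Gamma>(x \<mapsto> (n, r))) \<subseteq> csv \<Gamma> \<union> tsv r"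
  by (auto simp: csv_iff split: if_splits) blast

lemma csv_restrict: "csv (\<Gamma> |` X) \<subseteq> csv \<Gamma>"
  by (auto simp: csv_iff restrict_map_def split: if_splits) blast

lemma cso_cong:
  assumes "\<And>\<alpha>. \<alpha> \<in> csv \<Gamma> \<Longrightarrow> \<xi> \<alpha> = \<xi>' \<alpha>"
  shows "cso \<xi> \<Gamma> = cso \<xi>' \<Gamma>"
proof
  fix x show "cso \<xi> \<Gamma> x = cso \<xi>' \<Gamma> x"
    using assms tsv_subset_csv[of \<Gamma> x]
    by (cases "\<Gamma> x") (fastforce simp: cso_def pso_def intro!: tso_cong)+
qed

lemma cso_no_svs: "csv \<Gamma> = {} \<Longrightarrow> cso \<xi> \<Gamma> = \<Gamma>"
proof
  fix x assume "csv \<Gamma> = {}"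
  then show "cso \<xi> \<Gamma> x = \<Gamma> x"
    using tsv_subset_csv[of \<Gamma> x] tso_no_svs
    by (cases "\<Gamma> x") (auto simp: cso_def pso_def)
qed

lemma cfv_cso: "cfv (cso \<xi> \<Gamma>) = cfv \<Gamma> \<union> (\<Union>\<alpha>\<in>csv \<Gamma>. ivs (\<xi> \<alpha>))"
proof (rule set_eqI)
  fix i
  have "i \<in> cfv (cso \<xi> \<Gamma>) \<longleftrightarrow> (\<exists>x n r. \<Gamma> x = Some (n, r) \<and> i \<in> tfv (tso \<xi> r))"
    unfolding cfv_iff cso_Some by auto
  also have "\<dots> \<longleftrightarrow> i \<in> cfv \<Gamma> \<union> (\<Union>\<alpha>\<in>csv \<Gamma>. ivs (\<xi> \<alpha>))"
    by (simp only: tfv_tso cfv_iff UN_iff Un_iff Bex_def csv_iff) blast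
  finally show "i \<in> cfv (cso \<xi> \<Gamma>) \<longleftrightarrow> i \<in> cfv \<Gamma> \<union> (\<Union>\<alpha>\<in>csv \<Gamma>. ivs (\<xi> \<alpha>))" .
qed

lemma cfv_cso_disjoint:
  "A \<inter> cfv (cso \<xi> \<Gamma>) = {} \<longleftrightarrow> A \<inter> cfv \<Gamma> = {} \<and> (\<forall>\<alpha>\<in>csv \<Gamma>. A \<inter> ivs (\<xi> \<alpha>) = {})"
  by (auto simp: cfv_cso)

section \<open>Soundness\<close>

lemma model_Un: "model J \<xi> (\<Phi> \<union> \<Psi>) \<longleftrightarrow> model J \<xi> \<Phi> \<and> model J \<xi> \<Psi>"
  unfolding model_def by blast

lemma model_notin: "model J \<xi> (notin is B) \<Longrightarrow> \<forall>\<alpha>\<in>B. set is \<inter> ivs (\<xi> \<alpha>) = {}"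
  unfolding model_def notin_def by force

lemma model_no_bvs: "model J \<xi> \<Phi> \<Longrightarrow> \<forall>\<alpha>. bvs (\<xi> \<alpha>) = {}"
  unfolding model_def plain_def by blast

lemma inst_tso_topen_SV:
  "model J \<xi> \<Phi> \<Longrightarrow> length as = n \<Longrightarrow> inst (n, tso \<xi> r) (tso \<xi> (topen 0 (map SV as) r))"
  unfolding inst_def
  by (intro exI[of _ "map \<xi> as"]) (auto simp: tso_topen model_no_bvs comp_def model_def)

lemma subI_sound:
  fixes x y :: "('b, 'g) ty" and p q :: "('b, 'g) poly"
  shows "subI S \<Phi> x y \<Longrightarrow> model J \<xi> \<Phi> \<Longrightarrow> sub J (tso \<xi> x) (tso \<xi> y)"
    and "subIp S' \<Phi>' p q \<Longrightarrow> model J \<xi> \<Phi>' \<Longrightarrow> subp J (pso \<xi> p) (pso \<xi> q)"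
proof (induct rule: subI_subIp.inducts)
  case (subI_base a a' b)
  then show ?case by (auto simp: model_def intro: sub_base)
next
  case (subI_prod S1 \<Phi>1 r1 r1' S2 \<Phi>2 r2 r2')
  then show ?case by (auto simp: model_Un intro: sub_prod)
next
  case (subI_arr S1 \<Phi>1 n2 t2 n1 t1 S2 \<Phi>2 r1 r2)
  then show ?case by (auto simp: model_Un pso_def intro: sub_arr)
next
  case (subIp_all S \<Phi> "is" r1 "as" r2 n1 n2)
  have m: "model J \<xi> \<Phi>" and m1: "model J \<xi> (notin is (tsv r1))"
    and m2: "model J \<xi> (notin is (tsv r2))"
    using subIp_all.prems by (auto simp: model_Un)
  have s: "sub J (topen 0 (map IV is) (tso \<xi> r1)) (tso \<xi> (topen 0 (map SV as) r2))"
    using subIp_all(2)[OF m] by (simp add: tso_topen model_no_bvs[OF m] comp_def)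
  have d: "set is \<inter> (tfv (tso \<xi> r1) \<union> pfv (n2, tso \<xi> r2)) = {}"
    using subIp_all(8) model_notin[OF m1] model_notin[OF m2]
    by (simp add: Int_Un_distrib tfv_tso_disjoint pfv_def)
  show ?case
    unfolding pso_def fst_conv snd_conv
    by (rule subp_all[OF subIp_all(3,4) d inst_tso_topen_SV[OF m subIp_all(5)] s])
qed

lemma inferI_sound:
  assumes decl: "\<And>s. tsv (snd (D s)) = {}"
  shows "inferI D S \<Phi> \<Gamma> t \<rho> \<Longrightarrow> model J \<xi> \<Phi> \<Longrightarrow> hastype J D (cso \<xi> \<Gamma>) t (tso \<xi> \<rho>)"
proof (induct rule: inferI.induct)
  case (inferI_var \<Gamma> x n \<rho> as)
  then show ?case
    by (intro hastype_var[where \<sigma>="(n, tso \<xi> \<rho>)"]) (auto simp: cso_Some inst_tso_topen_SV)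
next
  case (inferI_fun s n \<rho> as \<Gamma>)
  then have "tso \<xi> \<rho> = \<rho>" using decl[of s] by (simp add: tso_no_svs)
  then show ?case using inferI_fun inst_tso_topen_SV[of J \<xi> "{}" as n \<rho>] by (auto intro: hastype_fun)
next
  case (inferI_let S1 \<Phi>1 \<Gamma> t r1 r2 S2 \<Phi>2 x1 x2 u \<rho>)
  then have "hastype J D (cso \<xi> \<Gamma>) t (TP (tso \<xi> r1) (tso \<xi> r2))"
    and "hastype J D ((cso \<xi> \<Gamma>)(x1 \<mapsto> (0, tso \<xi> r1), x2 \<mapsto> (0, tso \<xi> r2))) u (tso \<xi> \<rho>)"
    by (simp_all only: model_Un cso_upd tso.simps)
  then show ?case by (rule hastype_let)
next
  case (inferI_pair S1 \<Phi>1 \<Gamma> t1 r1 S2 \<Phi>2 t2 r2)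
  then show ?case by (auto simp: model_Un intro: hastype_pair)
next
  case (inferI_app S1 \<Phi>1 \<Gamma> t n t1 \<rho> S2 \<Phi>2 u t2 S3 \<Phi>3 "is")
  have m1: "model J \<xi> \<Phi>1" and m2: "model J \<xi> \<Phi>2" and m3: "model J \<xi> \<Phi>3"
    and n1: "model J \<xi> (notin is (tsv t1))" and n2: "model J \<xi> (notin is (csv (\<Gamma> |` fvt u)))"
    using inferI_app.prems by (auto simp: model_Un)
  have "sub J (tso \<xi> t2) (topen 0 (map IV is) (tso \<xi> t1))"
    using subI_sound(1)[OF inferI_app(5) m3] by (simp add: tso_topen model_no_bvs[OF m3] comp_def)
  moreover have "set is \<inter> (tfv (tso \<xi> t1) \<union> cfv (cso \<xi> \<Gamma> |` fvt u)) = {}"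
    using inferI_app(8) model_notin[OF n1] model_notin[OF n2]
    by (simp add: Int_Un_distrib tfv_tso_disjoint cfv_cso_disjoint flip: cso_restrict)
  ultimately show ?case
    using hastype_app inferI_app(2)[OF m1] inferI_app(4)[OF m2] inferI_app(6,7) by fastforce
qed

section \<open>Completeness\<close>

lemma exists_fresh_list:
  assumes "finite (A :: nat set)"
  shows "\<exists>as. length as = n \<and> distinct as \<and> set as \<inter> A = {}"
proof -
  define m where "m = Suc (Max (insert 0 A))"
  have "\<forall>x\<in>A. x < m"
    using assms by (auto simp: m_def le_imp_less_Suc)
  then show ?thesis by (intro exI[of _ "[m..<m + n]"]) auto
qed

lemma exists_map_extension:
  "length as = length bs \<Longrightarrow> distinct as \<Longrightarrow>
    \<exists>\<xi>'. map \<xi>' as = bs \<and> (\<forall>\<alpha>. \<alpha> \<notin> set as \<longrightarrow> \<xi>' \<alpha> = \<xi> \<alpha>)"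
proof (induct as arbitrary: bs)
  case (Cons a as)
  then obtain b bs' \<xi>' where "bs = b # bs'" "map \<xi>' as = bs'" "\<forall>\<alpha>. \<alpha> \<notin> set as \<longrightarrow> \<xi>' \<alpha> = \<xi> \<alpha>"
    by (cases bs) (auto, blast)
  moreover have "map (\<xi>'(a := b)) as = map \<xi>' as"
    using Cons.prems(2) by (auto intro: map_cong)
  ultimately show ?case by (intro exI[of _ "\<xi>'(a := b)"]) auto
qed auto

definition fresh_solution ::
    "('g \<Rightarrow> nat list \<Rightarrow> nat) \<Rightarrow> nat set \<Rightarrow> 'g con set \<Rightarrow> (nat \<Rightarrow> 'g idx) \<Rightarrow> (nat \<Rightarrow> 'g idx)
      \<Rightarrow> nat set \<Rightarrow> bool" where
  "fresh_solution J S \<Phi> \<xi> \<xi>' A \<longleftrightarrow> finite S \<and> S \<inter> A = {} \<and> (\<forall>\<alpha>. \<alpha> \<notin> S \<longrightarrow> \<xi>' \<alpha> = \<xi> \<alpha>) \<and>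
     (\<forall>\<alpha>. plain (\<xi>' \<alpha>)) \<and> (\<forall>c\<in>\<Phi>. sat J \<xi>' c \<and> con_svs c \<subseteq> S \<union> A)"

lemma fresh_solutionD:
  assumes "fresh_solution J S \<Phi> \<xi> \<xi>' A"
  shows "finite S" and "S \<inter> A = {}" and "\<forall>\<alpha>. plain (\<xi>' \<alpha>)" and "\<alpha> \<notin> S \<Longrightarrow> \<xi>' \<alpha> = \<xi> \<alpha>"
  using assms unfolding fresh_solution_def by blast+

lemma fresh_solution_agree: "fresh_solution J S \<Phi> \<xi> \<xi>' A \<Longrightarrow> tsv r \<subseteq> A \<Longrightarrow> tso \<xi>' r = tso \<xi> r"
  unfolding fresh_solution_def by (intro tso_cong) blast

lemma fresh_solution_agree_ctx:
  "fresh_solution J S \<Phi> \<xi> \<xi>' A \<Longrightarrow> csv \<Gamma> \<subseteq> A \<Longrightarrow> cso \<xi>' \<Gamma> = cso \<xi> \<Gamma>"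
  unfolding fresh_solution_def by (intro cso_cong) blast

lemma fresh_solution_trans:
  assumes g1: "fresh_solution J S1 \<Phi>1 \<xi> \<xi>1 A" and g2: "fresh_solution J S2 \<Phi>2 \<xi>1 \<xi>2 (A \<union> S1)"
  shows "fresh_solution J (S1 \<union> S2) (\<Phi>1 \<union> \<Phi>2) \<xi> \<xi>2 A" and "S1 \<inter> S2 = {}"
proof -
  have "sat J \<xi>2 c = sat J \<xi>1 c" if "c \<in> \<Phi>1" for c
    using that g1 g2 unfolding fresh_solution_def by (intro sat_cong) blast
  then show "fresh_solution J (S1 \<union> S2) (\<Phi>1 \<union> \<Phi>2) \<xi> \<xi>2 A"
    using g1 g2 unfolding fresh_solution_def by auto
  show "S1 \<inter> S2 = {}" using fresh_solutionD(2)[OF g2] by blast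
qed

lemma fresh_solution_notin:
  assumes "fresh_solution J S \<Phi> \<xi> \<xi>' A" and "B \<subseteq> A"
    and "\<forall>\<alpha>\<in>B. set is \<inter> ivs (\<xi> \<alpha>) = {}"
  shows "fresh_solution J S (\<Phi> \<union> notin is B) \<xi> \<xi>' A"
  using assms unfolding fresh_solution_def notin_def by (fastforce simp: disjoint_iff)

lemma fresh_solution_model: "fresh_solution J S \<Phi> \<xi> \<xi>' A \<Longrightarrow> is_interp J \<Longrightarrow> model J \<xi>' \<Phi>"
  unfolding fresh_solution_def model_def by blast

lemma fresh_instance:
  assumes "inst (n, tso \<xi> r) \<rho>" and "finite A" and "\<forall>\<alpha>. plain (\<xi> \<alpha>)" and "tsv r \<subseteq> A"
  obtains as \<xi>' where "length as = n" and "distinct as" and "set as \<inter> A = {}"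
    and "tso \<xi>' (topen 0 (map SV as) r) = \<rho>" and "fresh_solution J (set as) {} \<xi> \<xi>' A"
proof -
  obtain bs where bs: "length bs = n" "\<forall>b\<in>set bs. plain b" "\<rho> = topen 0 bs (tso \<xi> r)"
    using assms(1) by (auto simp: inst_def)
  obtain as where as: "length as = n" "distinct as" "set as \<inter> A = {}"
    using exists_fresh_list[OF assms(2)] by blast
  then obtain \<xi>' where \<xi>': "map \<xi>' as = bs" "\<forall>\<alpha>. \<alpha> \<notin> set as \<longrightarrow> \<xi>' \<alpha> = \<xi> \<alpha>"
    using exists_map_extension[of as bs \<xi>] bs(1) by auto
  have plain: "\<forall>\<alpha>. plain (\<xi>' \<alpha>)"
    using \<xi>' assms(3) bs(2) by (metis imageI list.set_map)
  have "tso \<xi>' r = tso \<xi> r"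
    using \<xi>'(2) as(3) assms(4) by (intro tso_cong) blast
  then have "tso \<xi>' (topen 0 (map SV as) r) = \<rho>"
    using \<xi>'(1) bs(3) plain by (simp add: tso_topen plain_def comp_def)
  moreover have "fresh_solution J (set as) {} \<xi> \<xi>' A"
    using as \<xi>'(2) plain by (auto simp: fresh_solution_def)
  ultimately show thesis using that as by blast
qed

lemma subI_complete:
  fixes x y :: "('b, 'g) ty" and p q :: "('b, 'g) poly"
  shows "sub J x y \<Longrightarrow> finite A \<Longrightarrow> \<forall>\<alpha>. plain (\<xi> \<alpha>) \<Longrightarrow> tso \<xi> \<sigma> = x \<Longrightarrow> tso \<xi> \<tau> = y \<Longrightarrow>
      tsv \<sigma> \<union> tsv \<tau> \<subseteq> A \<Longrightarrow> \<exists>S \<Phi> \<xi>'. subI S \<Phi> \<sigma> \<tau> \<and> fresh_solution J S \<Phi> \<xi> \<xi>' A"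
    and "subp J p q \<Longrightarrow> finite A \<Longrightarrow> \<forall>\<alpha>. plain (\<xi> \<alpha>) \<Longrightarrow> pso \<xi> \<sigma>' = p \<Longrightarrow> pso \<xi> \<tau>' = q \<Longrightarrow>
      psv \<sigma>' \<union> psv \<tau>' \<subseteq> A \<Longrightarrow> \<exists>S \<Phi> \<xi>'. subIp S \<Phi> \<sigma>' \<tau>' \<and> fresh_solution J S \<Phi> \<xi> \<xi>' A"
proof (induct arbitrary: \<sigma> \<tau> \<xi> A and \<sigma>' \<tau>' \<xi> A rule: sub_subp.inducts)
  case (sub_base a a' b)
  then obtain a0 a1 where "\<sigma> = TB b a0" "\<tau> = TB b a1" "iso \<xi> a0 = a" "iso \<xi> a1 = a'"
    by (auto simp: tso_eq_TB)
  then have "subI {} {CLe a0 a1} \<sigma> \<tau>" "fresh_solution J {} {CLe a0 a1} \<xi> \<xi> A"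
    using sub_base by (auto simp: fresh_solution_def subI_base)
  then show ?case by blast
next
  case (sub_prod r1 r1' r2 r2')
  obtain q1 q2 p1 p2 where e: "\<sigma> = TP q1 q2" "\<tau> = TP p1 p2"
    "tso \<xi> q1 = r1" "tso \<xi> q2 = r2" "tso \<xi> p1 = r1'" "tso \<xi> p2 = r2'"
    using sub_prod.prems(3,4) by (auto simp: tso_eq_TP)
  have sv: "tsv q1 \<union> tsv p1 \<subseteq> A" "tsv q2 \<union> tsv p2 \<subseteq> A" using sub_prod.prems(5) e by auto
  obtain S1 \<Phi>1 \<xi>1 where h1: "subI S1 \<Phi>1 q1 p1" "fresh_solution J S1 \<Phi>1 \<xi> \<xi>1 A"
    using sub_prod(2)[OF sub_prod.prems(1,2) e(3,5) sv(1)] by blast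
  have fin2: "finite (A \<union> S1)" and eq2: "tso \<xi>1 q2 = r2" "tso \<xi>1 p2 = r2'"
    and sv2: "tsv q2 \<union> tsv p2 \<subseteq> A \<union> S1"
    using fresh_solution_agree[OF h1(2)] fresh_solutionD(1)[OF h1(2)] e sv sub_prod.prems(1) by auto
  obtain S2 \<Phi>2 \<xi>2 where h2: "subI S2 \<Phi>2 q2 p2" "fresh_solution J S2 \<Phi>2 \<xi>1 \<xi>2 (A \<union> S1)"
    using sub_prod(4)[OF fin2 fresh_solutionD(3)[OF h1(2)] eq2 sv2] by blast
  show ?case
    using fresh_solution_trans[OF h1(2) h2(2)] h1(1) h2(1) e by (blast intro: subI_prod)
next
  case (sub_arr n2 t2 n1 t1 r1 r2)
  obtain s1 q1 s2 q2 where e: "\<sigma> = TA n1 s1 q1" "\<tau> = TA n2 s2 q2"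
    "tso \<xi> s1 = t1" "tso \<xi> q1 = r1" "tso \<xi> s2 = t2" "tso \<xi> q2 = r2"
    using sub_arr.prems(3,4) by (auto simp: tso_eq_TA)
  have sv: "psv (n2, s2) \<union> psv (n1, s1) \<subseteq> A" "tsv q1 \<union> tsv q2 \<subseteq> A"
    using sub_arr.prems(5) e by (auto simp: psv_def)
  have "pso \<xi> (n2, s2) = (n2, t2)" "pso \<xi> (n1, s1) = (n1, t1)" using e by (simp_all add: pso_def)
  then obtain S1 \<Phi>1 \<xi>1 where h1: "subIp S1 \<Phi>1 (n2, s2) (n1, s1)" "fresh_solution J S1 \<Phi>1 \<xi> \<xi>1 A"
    using sub_arr(2)[OF sub_arr.prems(1,2) _ _ sv(1)] by blast
  have fin2: "finite (A \<union> S1)" and eq2: "tso \<xi>1 q1 = r1" "tso \<xi>1 q2 = r2"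
    and sv2: "tsv q1 \<union> tsv q2 \<subseteq> A \<union> S1"
    using fresh_solution_agree[OF h1(2)] fresh_solutionD(1)[OF h1(2)] e sv sub_arr.prems(1) by auto
  obtain S2 \<Phi>2 \<xi>2 where h2: "subI S2 \<Phi>2 q1 q2" "fresh_solution J S2 \<Phi>2 \<xi>1 \<xi>2 (A \<union> S1)"
    using sub_arr(4)[OF fin2 fresh_solutionD(3)[OF h1(2)] eq2 sv2] by blast
  show ?case
    using fresh_solution_trans[OF h1(2) h2(2)] h1(1) h2(1) e by (blast intro: subI_arr)
next
  case (subp_all "is" n1 r1 \<sigma>2 r2)
  obtain s1 m s2 where e: "\<sigma>' = (n1, s1)" "\<tau>' = (m, s2)" "tso \<xi> s1 = r1" "\<sigma>2 = (m, tso \<xi> s2)"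
    using subp_all.prems(3,4) by (cases \<sigma>', cases \<tau>') (auto simp: pso_def)
  have sv: "tsv s1 \<subseteq> A" "tsv s2 \<subseteq> A" using subp_all.prems(5) e by (auto simp: psv_def)
  obtain as \<xi>a where as: "length as = m" "distinct as" "set as \<inter> A = {}"
    and \<xi>a: "tso \<xi>a (topen 0 (map SV as) s2) = r2" "fresh_solution J (set as) {} \<xi> \<xi>a A"
    using fresh_instance[OF subp_all(4)[unfolded e(4)] subp_all.prems(1,2) sv(2)] by metis
  have "tso \<xi>a (topen 0 (map IV is) s1) = topen 0 (map IV is) r1"
    using fresh_solution_agree[OF \<xi>a(2) sv(1)] e(3) fresh_solutionD(3)[OF \<xi>a(2)]
    by (simp add: tso_topen plain_def comp_def)
  moreover have "tsv (topen 0 (map IV is) s1) \<union> tsv (topen 0 (map SV as) s2) \<subseteq> A \<union> set as"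
    using sv tsv_topen_IV[of 0 "is" s1] tsv_topen_SV[of 0 as s2] by blast
  moreover have "finite (A \<union> set as)" using subp_all.prems(1) by simp
  ultimately obtain S \<Phi> \<xi>' where
    h: "subI S \<Phi> (topen 0 (map IV is) s1) (topen 0 (map SV as) s2)"
      "fresh_solution J S \<Phi> \<xi>a \<xi>' (A \<union> set as)"
    using subp_all(6)[OF _ fresh_solutionD(3)[OF \<xi>a(2)] _ \<xi>a(1)] by blast
  have fresh: "set is \<inter> (tfv s1 \<union> tfv s2) = {}" "\<forall>\<alpha>\<in>tsv s1 \<union> tsv s2. set is \<inter> ivs (\<xi> \<alpha>) = {}"
    using subp_all(3) unfolding e(3)[symmetric] e(4)
    by (auto simp: Int_Un_distrib tfv_tso_disjoint pfv_def)
  then have "fresh_solution J (S \<union> set as) (\<Phi> \<union> notin is (tsv s1) \<union> notin is (tsv s2)) \<xi> \<xi>' A"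
    using fresh_solution_notin[OF fresh_solution_notin[OF fresh_solution_trans(1)[OF \<xi>a(2) h(2)]]] sv
    by (simp add: Un_commute)
  moreover have "subIp (S \<union> set as) (\<Phi> \<union> notin is (tsv s1) \<union> notin is (tsv s2)) (n1, s1) (m, s2)"
  proof (rule subIp_all[OF h(1) subp_all(1,2) as(1,2)])
    show "set as \<inter> (S \<union> tsv s1 \<union> tsv s2) = {}" using fresh_solutionD(2)[OF h(2)] as(3) sv by blast
  qed (rule fresh(1))
  ultimately show ?case using e by blast
qed


lemma inferI_complete:
  assumes decl: "\<And>s. tsv (snd (D s)) = {}"
  shows "hastype J D \<Gamma>' t \<rho> \<Longrightarrow> finite A \<Longrightarrow> \<forall>\<alpha>. plain (\<xi> \<alpha>) \<Longrightarrow> \<Gamma>' = cso \<xi> \<Gamma> \<Longrightarrow>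
    csv \<Gamma> \<subseteq> A \<Longrightarrow>
    \<exists>\<tau> S \<Phi> \<xi>'. tso \<xi>' \<tau> = \<rho> \<and> inferI D S \<Phi> \<Gamma> t \<tau> \<and> tsv \<tau> \<subseteq> S \<union> A \<and> fresh_solution J S \<Phi> \<xi> \<xi>' A"
proof (induct arbitrary: \<Gamma> \<xi> A rule: hastype.induct)
  case (hastype_var \<Gamma>' x \<sigma> \<rho>)
  obtain n r where \<Gamma>x: "\<Gamma> x = Some (n, r)" and \<sigma>: "\<sigma> = (n, tso \<xi> r)"
    using hastype_var(1) hastype_var.prems(3) by (auto simp: cso_Some)
  have sv: "tsv r \<subseteq> A" using tsv_subset_csv[of \<Gamma> x, OF \<Gamma>x] hastype_var.prems(4) by blast
  obtain as \<xi>' where as: "length as = n" "distinct as" "set as \<inter> A = {}"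
    and \<xi>': "tso \<xi>' (topen 0 (map SV as) r) = \<rho>" "fresh_solution J (set as) {} \<xi> \<xi>' A"
    using fresh_instance[OF hastype_var(2)[unfolded \<sigma>] hastype_var.prems(1,2) sv] by metis
  have "inferI D (set as) {} \<Gamma> (TVar x) (topen 0 (map SV as) r)"
    using inferI_var[where \<Gamma>=\<Gamma> and x=x, OF \<Gamma>x as(1,2)] as(3) hastype_var.prems(4) by blast
  then show ?case using \<xi>' tsv_topen_SV[of 0 as r] sv by blast
next
  case (hastype_fun s \<rho> \<Gamma>')
  obtain n r where Ds: "D s = (n, r)" by (cases "D s")
  have sv: "tsv r = {}" using decl[of s] Ds by simp
  then have "inst (n, tso \<xi> r) \<rho>" using hastype_fun(1) Ds by (simp add: tso_no_svs)
  then obtain as \<xi>' where as: "length as = n" "distinct as" "set as \<inter> A = {}"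
    and \<xi>': "tso \<xi>' (topen 0 (map SV as) r) = \<rho>" "fresh_solution J (set as) {} \<xi> \<xi>' A"
    using fresh_instance[OF _ hastype_fun.prems(1,2)] sv by (metis empty_subsetI)
  have "inferI D (set as) {} \<Gamma> (TSym s) (topen 0 (map SV as) r)"
    using inferI_fun[where D=D and s=s and \<Gamma>=\<Gamma>, OF Ds as(1,2)] as(3) hastype_fun.prems(4) by blast
  then show ?case using \<xi>' tsv_topen_SV[of 0 as r] sv by blast
next
  case (hastype_let \<Gamma>' t r1 r2 x1 x2 u \<rho>)
  obtain \<tau>1 S1 \<Phi>1 \<xi>1 where h1: "tso \<xi>1 \<tau>1 = TP r1 r2" "inferI D S1 \<Phi>1 \<Gamma> t \<tau>1"
    "tsv \<tau>1 \<subseteq> S1 \<union> A" "fresh_solution J S1 \<Phi>1 \<xi> \<xi>1 A"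
    using hastype_let(2)[OF hastype_let.prems] by blast
  then obtain q1 q2 where q: "\<tau>1 = TP q1 q2" "tso \<xi>1 q1 = r1" "tso \<xi>1 q2 = r2"
    by (auto simp: tso_eq_TP)
  define \<Gamma>2 where "\<Gamma>2 = \<Gamma>(x1 \<mapsto> (0, q1), x2 \<mapsto> (0, q2))"
  have eq2: "\<Gamma>'(x1 \<mapsto> (0, r1), x2 \<mapsto> (0, r2)) = cso \<xi>1 \<Gamma>2"
    unfolding \<Gamma>2_def cso_upd q(2,3)[symmetric] hastype_let.prems(3)
      fresh_solution_agree_ctx[OF h1(4) hastype_let.prems(4)] ..
  have csv2: "csv \<Gamma>2 \<subseteq> A \<union> S1"
  proof -
    have "tsv q1 \<union> tsv q2 \<subseteq> A \<union> S1" using h1(3) q(1) by auto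
    then show ?thesis
      using csv_upd[of "\<Gamma>(x1 \<mapsto> (0, q1))" x2 0 q2] csv_upd[of \<Gamma> x1 0 q1] hastype_let.prems(4)
      unfolding \<Gamma>2_def by blast
  qed
  have fin2: "finite (A \<union> S1)" using hastype_let.prems(1) fresh_solutionD(1)[OF h1(4)] by simp
  obtain \<tau> S2 \<Phi>2 \<xi>2 where h2: "tso \<xi>2 \<tau> = \<rho>" "inferI D S2 \<Phi>2 \<Gamma>2 u \<tau>"
    "tsv \<tau> \<subseteq> S2 \<union> (A \<union> S1)" "fresh_solution J S2 \<Phi>2 \<xi>1 \<xi>2 (A \<union> S1)"
    using hastype_let(4)[OF fin2 fresh_solutionD(3)[OF h1(4)] eq2 csv2] by blast
  have "inferI D (S1 \<union> S2) (\<Phi>1 \<union> \<Phi>2) \<Gamma> (TLet x1 x2 t u) \<tau>"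
    using inferI_let[OF h1(2)[unfolded q(1)] h2(2)[unfolded \<Gamma>2_def]]
      fresh_solution_trans(2)[OF h1(4) h2(4)] .
  then show ?case using h2 fresh_solution_trans(1)[OF h1(4) h2(4)] by blast
next
  case (hastype_pair \<Gamma>' t1 r1 t2 r2)
  obtain \<tau>1 S1 \<Phi>1 \<xi>1 where h1: "tso \<xi>1 \<tau>1 = r1" "inferI D S1 \<Phi>1 \<Gamma> t1 \<tau>1"
    "tsv \<tau>1 \<subseteq> S1 \<union> A" "fresh_solution J S1 \<Phi>1 \<xi> \<xi>1 A"
    using hastype_pair(2)[OF hastype_pair.prems] by blast
  have fin2: "finite (A \<union> S1)" and eq2: "\<Gamma>' = cso \<xi>1 \<Gamma>" and csv2: "csv \<Gamma> \<subseteq> A \<union> S1"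
    using fresh_solution_agree_ctx[OF h1(4) hastype_pair.prems(4)] fresh_solutionD(1)[OF h1(4)]
      hastype_pair.prems by auto
  obtain \<tau>2 S2 \<Phi>2 \<xi>2 where h2: "tso \<xi>2 \<tau>2 = r2" "inferI D S2 \<Phi>2 \<Gamma> t2 \<tau>2"
    "tsv \<tau>2 \<subseteq> S2 \<union> (A \<union> S1)" "fresh_solution J S2 \<Phi>2 \<xi>1 \<xi>2 (A \<union> S1)"
    using hastype_pair(4)[OF fin2 fresh_solutionD(3)[OF h1(4)] eq2 csv2] by blast
  have "tso \<xi>2 (TP \<tau>1 \<tau>2) = TP r1 r2"
    using fresh_solution_agree[OF h2(4), of \<tau>1] h1(1,3) h2(1) by auto
  moreover have "inferI D (S1 \<union> S2) (\<Phi>1 \<union> \<Phi>2) \<Gamma> (TPair t1 t2) (TP \<tau>1 \<tau>2)"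
    using inferI_pair[OF h1(2) h2(2) fresh_solution_trans(2)[OF h1(4) h2(4)]] .
  moreover have "tsv (TP \<tau>1 \<tau>2) \<subseteq> (S1 \<union> S2) \<union> A" using h1(3) h2(3) by auto
  ultimately show ?case using fresh_solution_trans(1)[OF h1(4) h2(4)] by blast
next
  case (hastype_app \<Gamma>' t n t1 \<rho> u t2 "is")
  obtain \<tau>t S1 \<Phi>1 \<xi>1 where h1: "tso \<xi>1 \<tau>t = TA n t1 \<rho>" "inferI D S1 \<Phi>1 \<Gamma> t \<tau>t"
    "tsv \<tau>t \<subseteq> S1 \<union> A" "fresh_solution J S1 \<Phi>1 \<xi> \<xi>1 A"
    using hastype_app(2)[OF hastype_app.prems] by blast
  then obtain q1 q where q: "\<tau>t = TA n q1 q" "tso \<xi>1 q1 = t1" "tso \<xi>1 q = \<rho>"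
    by (auto simp: tso_eq_TA)
  have qA: "tsv q1 \<subseteq> A \<union> S1" "tsv q \<subseteq> A \<union> S1" using h1(3) q(1) by auto
  have fin2: "finite (A \<union> S1)" and eq2: "\<Gamma>' = cso \<xi>1 \<Gamma>" and csv2: "csv \<Gamma> \<subseteq> A \<union> S1"
    using fresh_solution_agree_ctx[OF h1(4) hastype_app.prems(4)] fresh_solutionD(1)[OF h1(4)]
      hastype_app.prems by auto
  obtain \<tau>2 S2 \<Phi>2 \<xi>2 where h2: "tso \<xi>2 \<tau>2 = t2" "inferI D S2 \<Phi>2 \<Gamma> u \<tau>2"
    "tsv \<tau>2 \<subseteq> S2 \<union> (A \<union> S1)" "fresh_solution J S2 \<Phi>2 \<xi>1 \<xi>2 (A \<union> S1)"
    using hastype_app(4)[OF fin2 fresh_solutionD(3)[OF h1(4)] eq2 csv2] by blast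
  have sub3: "sub J (tso \<xi>2 \<tau>2) (tso \<xi>2 (topen 0 (map IV is) q1))"
    using hastype_app(5) h2(1) fresh_solution_agree[OF h2(4) qA(1)] q(2) fresh_solutionD(3)[OF h2(4)]
    by (simp add: tso_topen plain_def comp_def)
  have fin3: "finite (A \<union> S1 \<union> S2)" using fin2 fresh_solutionD(1)[OF h2(4)] by simp
  have sv3: "tsv \<tau>2 \<union> tsv (topen 0 (map IV is) q1) \<subseteq> A \<union> S1 \<union> S2"
    using h2(3) qA(1) tsv_topen_IV[of 0 "is" q1] by auto
  obtain S3 \<Phi>3 \<xi>3 where h3: "subI S3 \<Phi>3 \<tau>2 (topen 0 (map IV is) q1)"
    "fresh_solution J S3 \<Phi>3 \<xi>2 \<xi>3 (A \<union> S1 \<union> S2)"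
    using subI_complete(1)[OF sub3 fin3 fresh_solutionD(3)[OF h2(4)] refl refl sv3] by blast
  have "set is \<inter> tfv (tso \<xi>1 q1) = {}" "set is \<inter> cfv (cso \<xi> (\<Gamma> |` fvt u)) = {}"
    using hastype_app(8) q(2) hastype_app.prems(3) by (auto simp: cso_restrict)
  then have fresh: "set is \<inter> (tfv q1 \<union> cfv (\<Gamma> |` fvt u)) = {}"
    "\<forall>\<alpha>\<in>tsv q1. set is \<inter> ivs (\<xi>1 \<alpha>) = {}" "\<forall>\<alpha>\<in>csv (\<Gamma> |` fvt u). set is \<inter> ivs (\<xi> \<alpha>) = {}"
    by (auto simp only: tfv_tso_disjoint cfv_cso_disjoint)
  have g23: "fresh_solution J (S2 \<union> S3) (\<Phi>2 \<union> \<Phi>3) \<xi>1 \<xi>3 (A \<union> S1)" and S23: "S2 \<inter> S3 = {}"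
    using fresh_solution_trans[OF h2(4) h3(2)] by auto
  from fresh_solution_trans[OF h1(4) fresh_solution_notin[OF g23 qA(1) fresh(2)]]
  have g: "fresh_solution J (S1 \<union> (S2 \<union> S3)) (\<Phi>1 \<union> (\<Phi>2 \<union> \<Phi>3 \<union> notin is (tsv q1))) \<xi> \<xi>3 A"
    and S123: "S1 \<inter> (S2 \<union> S3) = {}" by auto
  have "csv (\<Gamma> |` fvt u) \<subseteq> A" using csv_restrict hastype_app.prems(4) by blast
  from fresh_solution_notin[OF g this fresh(3)]
  have "fresh_solution J (S1 \<union> S2 \<union> S3)
      (\<Phi>1 \<union> \<Phi>2 \<union> \<Phi>3 \<union> notin is (tsv q1) \<union> notin is (csv (\<Gamma> |` fvt u))) \<xi> \<xi>3 A"
    by (simp add: Un_assoc)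
  moreover have "inferI D (S1 \<union> S2 \<union> S3)
      (\<Phi>1 \<union> \<Phi>2 \<union> \<Phi>3 \<union> notin is (tsv q1) \<union> notin is (csv (\<Gamma> |` fvt u))) \<Gamma> (TApp t u) q"
    using inferI_app[OF h1(2)[unfolded q(1)] h2(2) h3(1) hastype_app(6,7) fresh(1)]
      S123 S23 fresh_solutionD(2)[OF h3(2)] hastype_app.prems(4) by blast
  moreover have "tso \<xi>3 q = \<rho>" using fresh_solution_agree[OF g23 qA(2)] q(3) by simp
  moreover have "tsv q \<subseteq> (S1 \<union> S2 \<union> S3) \<union> A" using qA(2) by blast
  ultimately show ?case by blast
qed

lemma decl_ok_closed: "decl_ok \<sigma> \<Longrightarrow> tsv (snd \<sigma>) = {}"
  by (simp add: decl_ok_def psv_def)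

theorem mainTheorem13:
  fixes D :: "'f \<Rightarrow> ('b, 'g) poly"
  assumes decl: "\<And>s. decl_ok (D s)"
  shows "(\<forall>S \<Phi> (\<Gamma> :: ('v, 'b, 'g) ctx) (t :: ('v, 'f) trm) \<rho> J \<xi>.
            ctx_ok \<Gamma> \<and> inferI D S \<Phi> \<Gamma> t \<rho> \<and> model J \<xi> \<Phi> \<longrightarrow>
            hastype J D (cso \<xi> \<Gamma>) t (tso \<xi> \<rho>))
       \<and> (\<forall>J (\<Gamma> :: ('v, 'b, 'g) ctx) (t :: ('v, 'f) trm) \<rho>.
            is_interp J \<and> ctx_ok \<Gamma> \<and> csv \<Gamma> = {} \<and> mono_ok \<rho> \<and> tsv \<rho> = {} \<and>
            hastype J D \<Gamma> t \<rho> \<longrightarrow>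
            (\<exists>\<tau> \<xi> \<Phi> S. tso \<xi> \<tau> = \<rho> \<and> inferI D S \<Phi> \<Gamma> t \<tau> \<and> model J \<xi> \<Phi>))"
proof (intro conjI allI impI)
  fix S \<Phi> and \<Gamma> :: "('v, 'b, 'g) ctx" and t :: "('v, 'f) trm" and \<rho> J \<xi>
  assume "ctx_ok \<Gamma> \<and> inferI D S \<Phi> \<Gamma> t \<rho> \<and> model J \<xi> \<Phi>"
  then show "hastype J D (cso \<xi> \<Gamma>) t (tso \<xi> \<rho>)"
    using inferI_sound[where D=D, OF decl_ok_closed[OF decl]] by blast
next
  fix J and \<Gamma> :: "('v, 'b, 'g) ctx" and t :: "('v, 'f) trm" and \<rho>
  assume "is_interp J \<and> ctx_ok \<Gamma> \<and> csv \<Gamma> = {} \<and> mono_ok \<rho> \<and> tsv \<rho> = {} \<and> hastype J D \<Gamma> t \<rho>"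
  then have interp: "is_interp J" and closed: "csv \<Gamma> = {}" and typed: "hastype J D \<Gamma> t \<rho>"
    by simp_all
  have "\<Gamma> = cso (\<lambda>_. IZ) \<Gamma>" using cso_no_svs[OF closed] ..
  then have "\<exists>\<tau> S \<Phi> \<xi>. tso \<xi> \<tau> = \<rho> \<and> inferI D S \<Phi> \<Gamma> t \<tau> \<and> tsv \<tau> \<subseteq> S \<union> {} \<and>
      fresh_solution J S \<Phi> (\<lambda>_. IZ) \<xi> {}"
    by (rule inferI_complete[OF decl_ok_closed[OF decl] typed finite.emptyI, rotated])
      (simp_all add: closed plain_def)
  then obtain \<tau> S \<Phi> \<xi> where sol: "tso \<xi> \<tau> = \<rho>" "inferI D S \<Phi> \<Gamma> t \<tau>"
    "fresh_solution J S \<Phi> (\<lambda>_. IZ) \<xi> {}"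
    by blast
  then show "\<exists>\<tau> \<xi> \<Phi> S. tso \<xi> \<tau> = \<rho> \<and> inferI D S \<Phi> \<Gamma> t \<tau> \<and> model J \<xi> \<Phi>"
    using fresh_solution_model[OF sol(3) interp] by blast
qed

end
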